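(* Let $\varphi(x)=\sum_{i\ge0}\gamma_ix^i\in\mathbb{K}[[x]]$ and let $r$ be an even integer. If $r<0$, assume $\gamma_i=0$ for each $i\le -r$. Stipulating $\gamma_i=0$ for $i<0$, the $\gamma_i$ satisfy $$\sum_{i=0}^{m-1}(-1)^i\binom{m-1}{i}\gamma_{m-r+i}=0$$ for each $m\ge1$ if and only if $\varphi\in\mathcal{F}_r$.
   Context: $\mathbb{K}\in\{\mathbb{Q},\mathbb{R},\mathbb{C}\}$. For $r\in\mathbb{Z}$, $\mathcal{F}_r$ denotes the space of $\varphi\in\mathbb{K}[[x]]$ with $\varphi(x/(x-1))=(1-x)^r\varphi(x)$. *)

theory Defs
  imports "HOL-Computational_Algebra.Formal_Power_Series"
begin

definition fps_int_power :: "'a::field fps \<Rightarrow> int \<Rightarrow> 'a fps" where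
  "fps_int_power f r = (if 0 \<le> r then f ^ nat r else inverse (f ^ nat (- r)))"

definition F_space :: "int \<Rightarrow> 'a::field fps set" where
  "F_space r = {\<phi>. \<phi> oo (fps_X * inverse (fps_X - 1)) = fps_int_power (1 - fps_X) r * \<phi>}"

definition coeff_int :: "'a::zero fps \<Rightarrow> int \<Rightarrow> 'a" where
  "coeff_int \<phi> j = (if j < 0 then 0 else fps_nth \<phi> (nat j))"

end

theory Submission
  imports Defs
begin

text \<open>Write \<open>T \<phi> = \<phi> \<circ> X/(X - 1)\<close>. Since \<open>X/(X - 1)\<close> is an involution and
  \<open>T ((1 - X)\<^sup>k) = (1 - X)\<^sup>-\<^sup>k\<close>, the defect \<open>D = T \<phi> - (1 - X)\<^sup>r \<phi>\<close> satisfies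
  \<open>T D = - (1 - X)\<^sup>-\<^sup>r D\<close>; comparing lowest coefficients, a nonzero \<open>D\<close> has odd
  subdegree \<open>N\<close>, and \<open>N \<ge> 1 - r\<close>. Negating upper binomial indices shows that for odd
  \<open>n = a + b + 1\<close> the \<open>n\<close>-th coefficients of \<open>(1 - X)\<^sup>a \<phi>\<close> and \<open>(1 - X)\<^sup>b T \<phi>\<close> are
  opposite, so the \<open>m\<close>-th recurrence sum is, up to a factor \<open>\<plusminus>2\<close>, the coefficient of
  \<open>X\<^sup>2\<^sup>m\<^sup>-\<^sup>1\<^sup>-\<^sup>r\<close> in \<open>(1 - X)\<^sup>m\<^sup>-\<^sup>1\<^sup>-\<^sup>r D\<close>. Hence \<open>D = 0\<close> kills all sums, while for
  \<open>2m - 1 - r = N\<close> that coefficient is the nonzero lowest coefficient of \<open>D\<close>.\<close>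

definition one_minus_X_pow :: "int \<Rightarrow> 'a::field_char_0 fps" where
  "one_minus_X_pow k = fps_binomial (of_int k) oo - fps_X"

lemma one_minus_X_pow_nth: "fps_nth (one_minus_X_pow k) n = (-1) ^ n * (of_int k gchoose n)"
  by (simp add: one_minus_X_pow_def fps_compose_uminus')

lemma one_minus_X_pow_nth_0 [simp]: "fps_nth (one_minus_X_pow k) 0 = 1"
  by (simp add: one_minus_X_pow_nth)

lemma one_minus_X_pow_add: "one_minus_X_pow (a + b) = one_minus_X_pow a * one_minus_X_pow b"
  by (simp add: one_minus_X_pow_def fps_binomial_add_mult fps_compose_mult_distrib)

lemma one_minus_X_pow_0 [simp]: "one_minus_X_pow 0 = 1"
  by (simp add: one_minus_X_pow_def)

lemma one_minus_X_pow_power: "one_minus_X_pow k ^ j = one_minus_X_pow (int j * k)"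
  by (simp add: one_minus_X_pow_def fps_compose_power fps_binomial_power)

lemma one_minus_X_pow_of_nat: "one_minus_X_pow (int n) = (1 - fps_X) ^ n"
proof -
  have "(1 - fps_X) ^ n = fps_binomial (of_nat n) oo (- fps_X :: 'a fps)"
    using one_minus_const_fps_X_power[of 1 n] by simp
  then show ?thesis by (simp add: one_minus_X_pow_def)
qed

lemma one_minus_X_pow_of_nat_nth:
  "fps_nth (one_minus_X_pow (int a)) i = (-1) ^ i * of_nat (a choose i)"
  by (simp add: one_minus_X_pow_nth binomial_gbinomial)

lemma one_minus_X_pow_1: "one_minus_X_pow 1 = 1 - fps_X"
  using one_minus_X_pow_of_nat[of 1] by simp

lemma one_minus_X_pow_neg_mult: "one_minus_X_pow (- k) * one_minus_X_pow k = 1"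
  by (simp flip: one_minus_X_pow_add)

lemma fps_int_power_one_minus_X: "fps_int_power (1 - fps_X) k = one_minus_X_pow k"
proof (cases "0 \<le> k")
  case True
  then show ?thesis by (simp add: fps_int_power_def flip: one_minus_X_pow_of_nat)
next
  case False
  then have "inverse ((1 - fps_X) ^ nat (- k)) = inverse (one_minus_X_pow (- k))"
    by (simp flip: one_minus_X_pow_of_nat)
  also have "\<dots> = one_minus_X_pow k"
    by (rule fps_inverse_unique) (rule one_minus_X_pow_neg_mult)
  finally show ?thesis using False by (simp add: fps_int_power_def)
qed

lemma one_minus_X_pow_nth_reflect:
  "fps_nth (one_minus_X_pow (int t - int a - 1)) t = (-1) ^ t * fps_nth (one_minus_X_pow (int a)) t"
  by (simp add: one_minus_X_pow_nth gbinomial_negated_upper[of "of_nat a"])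

definition X_div_X_minus_1 :: "'a::field_char_0 fps" where
  "X_div_X_minus_1 = fps_X * inverse (fps_X - 1)"

lemma X_div_X_minus_1_eq: "X_div_X_minus_1 = - (fps_X * one_minus_X_pow (-1))"
proof -
  have "(1 - fps_X) * one_minus_X_pow (-1) = (1 :: 'a fps)"
    using one_minus_X_pow_neg_mult[of 1] by (simp add: one_minus_X_pow_1 mult.commute)
  then have "(fps_X - 1) * - one_minus_X_pow (-1) = (1 :: 'a fps)"
    by (simp add: algebra_simps)
  then have "inverse (fps_X - 1 :: 'a fps) = - one_minus_X_pow (-1)"
    by (rule fps_inverse_unique)
  then show ?thesis by (simp add: X_div_X_minus_1_def)
qed

lemma X_div_X_minus_1_nth_0 [simp]: "fps_nth X_div_X_minus_1 0 = 0"
  by (simp add: X_div_X_minus_1_eq)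

lemma X_div_X_minus_1_power:
  "(X_div_X_minus_1 :: 'a::field_char_0 fps) ^ j
    = fps_const ((-1) ^ j) * (fps_X ^ j * one_minus_X_pow (- int j))"
proof -
  have "(X_div_X_minus_1 :: 'a fps) ^ j = (-1) ^ j * (fps_X ^ j * one_minus_X_pow (-1) ^ j)"
    by (simp only: X_div_X_minus_1_eq power_minus[of "fps_X * one_minus_X_pow (-1)"]
        power_mult_distrib)
  moreover have "(-1 :: 'a fps) ^ j = fps_const ((-1) ^ j)"
    by (simp only: fps_const_1_eq_1[symmetric] fps_const_neg fps_const_power)
  ultimately show ?thesis
    by (simp only: one_minus_X_pow_power mult_minus1_right)
qed

lemma one_minus_X_pow_1_compose: "one_minus_X_pow 1 oo X_div_X_minus_1 = one_minus_X_pow (-1)"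
proof -
  have "one_minus_X_pow 1 oo X_div_X_minus_1 = 1 - X_div_X_minus_1"
    by (simp only: one_minus_X_pow_1 fps_compose_sub_distrib fps_compose_1
        fps_X_fps_compose_startby0[OF X_div_X_minus_1_nth_0])
  also have "\<dots> = one_minus_X_pow (-1) * one_minus_X_pow 1 + fps_X * one_minus_X_pow (-1)"
    by (simp add: X_div_X_minus_1_eq one_minus_X_pow_neg_mult)
  also have "\<dots> = one_minus_X_pow (-1)"
    by (simp add: one_minus_X_pow_1 algebra_simps)
  finally show ?thesis .
qed

lemma one_minus_X_pow_minus_1_compose:
  "one_minus_X_pow (-1) oo X_div_X_minus_1 = (one_minus_X_pow 1 :: 'a::field_char_0 fps)"
proof -
  have "one_minus_X_pow (-1) * (one_minus_X_pow (-1) oo X_div_X_minus_1)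
      = (one_minus_X_pow 1 * one_minus_X_pow (-1) :: 'a fps) oo X_div_X_minus_1"
    by (simp only: fps_compose_mult_distrib[OF X_div_X_minus_1_nth_0] one_minus_X_pow_1_compose)
  also have "\<dots> = 1"
    using one_minus_X_pow_neg_mult[of "-1", where 'a = 'a] by (simp only: minus_minus fps_compose_1)
  finally have "inverse (one_minus_X_pow (-1)) = (one_minus_X_pow (-1) oo X_div_X_minus_1 :: 'a fps)"
    by (rule fps_inverse_unique)
  moreover have "inverse (one_minus_X_pow (-1)) = (one_minus_X_pow 1 :: 'a fps)"
    using one_minus_X_pow_neg_mult[of 1] by (rule fps_inverse_unique)
  ultimately show ?thesis by simp
qed

lemma one_minus_X_pow_compose:
  "one_minus_X_pow k oo X_div_X_minus_1 = one_minus_X_pow (- k)"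
proof -
  obtain n :: nat and s :: int where k: "k = int n * s" and s: "s = 1 \<or> s = -1"
  proof (cases "0 \<le> k")
    case True
    then show ?thesis using that[of "nat k" 1] by simp
  next
    case False
    then show ?thesis using that[of "nat (- k)" "-1"] by simp
  qed
  have "one_minus_X_pow k oo X_div_X_minus_1 = one_minus_X_pow s ^ n oo X_div_X_minus_1"
    by (simp only: k one_minus_X_pow_power)
  also have "\<dots> = (one_minus_X_pow s oo X_div_X_minus_1) ^ n"
    by (rule fps_compose_power[symmetric]) simp
  also have "\<dots> = one_minus_X_pow (- s) ^ n"
    using s by (elim disjE) (simp_all add: one_minus_X_pow_1_compose one_minus_X_pow_minus_1_compose)
  also have "\<dots> = one_minus_X_pow (- k)"
    by (simp only: k one_minus_X_pow_power mult_minus_right)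
  finally show ?thesis .
qed

lemma X_div_X_minus_1_compose_self: "X_div_X_minus_1 oo X_div_X_minus_1 = fps_X"
proof -
  have "X_div_X_minus_1 oo X_div_X_minus_1 = - (X_div_X_minus_1 * one_minus_X_pow 1)"
    by (subst (1) X_div_X_minus_1_eq)
       (simp add: fps_compose_uminus fps_compose_mult_distrib one_minus_X_pow_compose)
  also have "\<dots> = fps_X"
    by (simp only: X_div_X_minus_1_eq minus_mult_left minus_minus mult.assoc
        one_minus_X_pow_neg_mult mult_1_right)
  finally show ?thesis .
qed

lemma fps_compose_X_div_X_minus_1_twice:
  "(\<phi> oo X_div_X_minus_1) oo X_div_X_minus_1 = \<phi>"
proof -
  have "\<phi> oo (X_div_X_minus_1 oo X_div_X_minus_1) = (\<phi> oo X_div_X_minus_1) oo X_div_X_minus_1"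
    by (rule fps_compose_assoc) simp_all
  then show ?thesis by (simp add: X_div_X_minus_1_compose_self)
qed

lemma X_div_X_minus_1_power_nth_self: "fps_nth (X_div_X_minus_1 ^ n) n = (-1) ^ n"
  unfolding X_div_X_minus_1_power fps_mult_left_const_nth fps_X_power_mult_nth by simp

lemma fps_mult_compose_nth:
  fixes f g \<phi> :: "'a::comm_ring_1 fps"
  assumes "fps_nth g 0 = 0"
  shows "fps_nth (f * (\<phi> oo g)) n = (\<Sum>i = 0..n. fps_nth \<phi> i * fps_nth (f * g ^ i) n)"
proof -
  have compose_nth: "fps_nth (\<phi> oo g) k = (\<Sum>i = 0..n. fps_nth \<phi> i * fps_nth (g ^ i) k)"
    if "k \<le> n" for k
    unfolding fps_compose_nth using that startsby_zero_power_prefix[OF assms]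
    by (intro sum.mono_neutral_left) auto
  have "fps_nth (f * (\<phi> oo g)) n
      = (\<Sum>k = 0..n. \<Sum>i = 0..n. fps_nth \<phi> i * (fps_nth f k * fps_nth (g ^ i) (n - k)))"
    unfolding fps_mult_nth by (intro sum.cong) (simp_all add: compose_nth sum_distrib_left algebra_simps)
  also have "\<dots> = (\<Sum>i = 0..n. fps_nth \<phi> i * fps_nth (f * g ^ i) n)"
    by (subst sum.swap) (simp add: fps_mult_nth sum_distrib_left)
  finally show ?thesis .
qed

lemma fps_mult_nth_coeff_int:
  fixes f \<phi> :: "'a::comm_semiring_1 fps"
  assumes "\<forall>i>a. fps_nth f i = 0"
  shows "fps_nth (f * \<phi>) n = (\<Sum>i = 0..a. fps_nth f i * coeff_int \<phi> (int n - int i))"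
proof -
  have "fps_nth (f * \<phi>) n = (\<Sum>i = 0..max a n. fps_nth f i * coeff_int \<phi> (int n - int i))"
    unfolding fps_mult_nth
    by (rule sum.mono_neutral_cong_left) (auto simp: coeff_int_def nat_diff_distrib)
  also have "\<dots> = (\<Sum>i = 0..a. fps_nth f i * coeff_int \<phi> (int n - int i))"
    using assms by (intro sum.mono_neutral_right) auto
  finally show ?thesis .
qed

lemma alternating_binomial_sum_eq_nth:
  "(\<Sum>i = 0..a. (-1) ^ i * of_nat (a choose i) * coeff_int \<phi> (int n - int a + int i))
    = (-1) ^ a * fps_nth (one_minus_X_pow (int a) * \<phi>) n"
proof -
  have "(\<Sum>i = 0..a. (-1) ^ i * of_nat (a choose i) * coeff_int \<phi> (int n - int a + int i))
      = (\<Sum>i = 0..a. (-1) ^ (a - i) * of_nat (a choose i) * coeff_int \<phi> (int n - int i))"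
    by (subst sum.atLeastAtMost_rev) (intro sum.cong; simp add: binomial_symmetric[symmetric] of_nat_diff)
  also have "\<dots> = (\<Sum>i = 0..a. (-1) ^ a * ((-1) ^ i * of_nat (a choose i) * coeff_int \<phi> (int n - int i)))"
    by (intro sum.cong) (simp_all add: power_add flip: neg_one_power_add_eq_neg_one_power_diff)
  also have "\<dots> = (-1) ^ a * fps_nth (one_minus_X_pow (int a) * \<phi>) n"
    by (simp add: fps_mult_nth_coeff_int[where a = a] one_minus_X_pow_of_nat_nth binomial_eq_0
        sum_distrib_left mult.assoc)
  finally show ?thesis .
qed

lemma one_minus_X_pow_mult_X_div_X_minus_1_power_nth:
  assumes "j \<le> n"
  shows "fps_nth (one_minus_X_pow b * X_div_X_minus_1 ^ j) n
    = (-1) ^ j * fps_nth (one_minus_X_pow (b - int j)) (n - j)"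
proof -
  have eq: "one_minus_X_pow b * X_div_X_minus_1 ^ j
      = fps_const ((-1) ^ j) * (fps_X ^ j * one_minus_X_pow (b - int j))"
    by (simp add: X_div_X_minus_1_power mult.left_commute flip: one_minus_X_pow_add)
  show ?thesis
    unfolding eq fps_mult_left_const_nth fps_X_power_mult_nth using assms by simp
qed

lemma one_minus_X_pow_mult_compose_nth_eq_neg:
  fixes \<phi> :: "'a::field_char_0 fps"
  assumes "odd n" and "int n = int a + b + 1"
  shows "fps_nth (one_minus_X_pow b * (\<phi> oo X_div_X_minus_1)) n
    = - fps_nth (one_minus_X_pow (int a) * \<phi>) n"
proof -
  have coeff_pair: "(-1) ^ j * fps_nth (one_minus_X_pow (b - int j)) (n - j)
      = - fps_nth (one_minus_X_pow (int a) :: 'a fps) (n - j)" if "j \<le> n" for j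
  proof -
    have "b - int j = int (n - j) - int a - 1" using assms(2) that by simp
    then have "(-1) ^ j * fps_nth (one_minus_X_pow (b - int j)) (n - j)
        = (-1) ^ (j + (n - j)) * fps_nth (one_minus_X_pow (int a) :: 'a fps) (n - j)"
      by (simp add: one_minus_X_pow_nth_reflect power_add)
    also have "(-1 :: 'a) ^ (j + (n - j)) = -1" using that assms(1) by simp
    finally show ?thesis by simp
  qed
  have "fps_nth (one_minus_X_pow b * (\<phi> oo X_div_X_minus_1)) n
      = (\<Sum>j = 0..n. fps_nth \<phi> j * ((-1) ^ j * fps_nth (one_minus_X_pow (b - int j)) (n - j)))"
    unfolding fps_mult_compose_nth[OF X_div_X_minus_1_nth_0]
    by (intro sum.cong) (simp_all add: one_minus_X_pow_mult_X_div_X_minus_1_power_nth)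
  also have "\<dots> = - (\<Sum>j = 0..n. fps_nth \<phi> j * fps_nth (one_minus_X_pow (int a)) (n - j))"
    by (simp add: coeff_pair flip: sum_negf)
  also have "\<dots> = - fps_nth (one_minus_X_pow (int a) * \<phi>) n"
    by (subst mult.commute) (simp add: fps_mult_nth)
  finally show ?thesis .
qed

definition F_defect :: "int \<Rightarrow> 'a::field_char_0 fps \<Rightarrow> 'a fps" where
  "F_defect r \<phi> = (\<phi> oo X_div_X_minus_1) - one_minus_X_pow r * \<phi>"

lemma F_space_iff_F_defect_eq_0: "\<phi> \<in> F_space r \<longleftrightarrow> F_defect r \<phi> = 0"
  by (simp add: F_space_def F_defect_def fps_int_power_one_minus_X flip: X_div_X_minus_1_def)

lemma F_defect_compose:
  "F_defect r \<phi> oo X_div_X_minus_1 = - (one_minus_X_pow (- r) * F_defect r \<phi>)"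
proof -
  have "F_defect r \<phi> oo X_div_X_minus_1 = \<phi> - one_minus_X_pow (- r) * (\<phi> oo X_div_X_minus_1)"
    by (simp add: F_defect_def fps_compose_sub_distrib fps_compose_mult_distrib
        one_minus_X_pow_compose fps_compose_X_div_X_minus_1_twice)
  also have "\<dots> = - (one_minus_X_pow (- r) * F_defect r \<phi>)"
    by (simp add: F_defect_def right_diff_distrib one_minus_X_pow_neg_mult flip: mult.assoc)
  finally show ?thesis .
qed

lemma nth_F_defect_eq_0:
  assumes "\<forall>i\<le>j. fps_nth \<phi> i = 0"
  shows "fps_nth (F_defect r \<phi>) j = 0"
  using assms by (auto simp: F_defect_def fps_compose_nth fps_mult_nth intro!: sum.neutral)

lemma nth_subdegree_compose_X_div_X_minus_1:
  "fps_nth (D oo X_div_X_minus_1) (subdegree D) = (-1) ^ subdegree D * fps_nth D (subdegree D)"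
proof -
  have "fps_nth (D oo X_div_X_minus_1) (subdegree D)
      = (\<Sum>i\<in>{subdegree D}. fps_nth D i * fps_nth (X_div_X_minus_1 ^ i) (subdegree D))"
    unfolding fps_compose_nth by (intro sum.mono_neutral_right) (auto intro!: nth_less_subdegree_zero)
  then show ?thesis by (simp add: X_div_X_minus_1_power_nth_self)
qed

lemma odd_subdegree_if_compose_eq_neg:
  assumes "D \<noteq> 0" and "D oo X_div_X_minus_1 = - (one_minus_X_pow k * D)"
  shows "odd (subdegree D)"
proof (rule ccontr)
  assume "\<not> odd (subdegree D)"
  then have "fps_nth D (subdegree D) = - fps_nth D (subdegree D)"
    using nth_subdegree_compose_X_div_X_minus_1[of D] assms(2) by simp
  then have "2 * fps_nth D (subdegree D) = 0" by simp
  then show False using assms(1) by simp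
qed

definition recurrence_sum :: "'a::field_char_0 fps \<Rightarrow> int \<Rightarrow> nat \<Rightarrow> 'a" where
  "recurrence_sum \<phi> r m =
    (\<Sum>i = 0..m - 1. (-1) ^ i * of_nat ((m - 1) choose i) * coeff_int \<phi> (int m - r + int i))"

lemma recurrence_sum_eq_0_if_neg:
  assumes "m \<ge> 1" and "2 * int m - 1 - r < 0"
  shows "recurrence_sum \<phi> r m = 0"
  unfolding recurrence_sum_def using assms by (intro sum.neutral) (auto simp: coeff_int_def)

lemma nth_one_minus_X_pow_mult_F_defect:
  fixes \<phi> :: "'a::field_char_0 fps"
  assumes "even r" and "m \<ge> 1" and n: "int n = 2 * int m - 1 - r"
  shows "fps_nth (one_minus_X_pow (int m - 1 - r) * F_defect r \<phi>) n
    = 2 * (-1) ^ m * recurrence_sum \<phi> r m"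
proof -
  define a where "a = m - 1"
  have m: "m = Suc a" and int_a: "int a = int m - 1" using assms(2) by (simp_all add: a_def)
  have "odd (int n)" using n assms(1) by presburger
  then have "odd n" by simp
  have sum: "recurrence_sum \<phi> r m = (-1) ^ a * fps_nth (one_minus_X_pow (int a) * \<phi>) n"
    unfolding recurrence_sum_def a_def[symmetric] alternating_binomial_sum_eq_nth[symmetric]
    by (rule sum.cong) (simp_all add: n int_a)
  have "one_minus_X_pow (int a - r) * one_minus_X_pow r = (one_minus_X_pow (int a) :: 'a fps)"
    by (simp flip: one_minus_X_pow_add)
  then have "one_minus_X_pow (int a - r) * F_defect r \<phi>
      = one_minus_X_pow (int a - r) * (\<phi> oo X_div_X_minus_1) - one_minus_X_pow (int a) * \<phi>"
    by (simp add: F_defect_def right_diff_distrib flip: mult.assoc)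
  then have "fps_nth (one_minus_X_pow (int a - r) * F_defect r \<phi>) n
      = - 2 * fps_nth (one_minus_X_pow (int a) * \<phi>) n"
    using one_minus_X_pow_mult_compose_nth_eq_neg[OF \<open>odd n\<close>, of a "int a - r" \<phi>] n int_a
    by (simp only: fps_sub_nth) simp
  moreover have "int m - 1 - r = int a - r" using int_a by simp
  moreover have "(-1) ^ m * ((-1) ^ a * x) = - (x :: 'a)" for x
    by (simp add: m flip: mult.assoc power_add)
  ultimately show ?thesis
    unfolding sum by (simp add: mult.assoc)
qed

lemma recurrence_sum_eq_0_if_F_defect_eq_0:
  assumes "even r" and "F_defect r \<phi> = 0" and "m \<ge> 1"
  shows "recurrence_sum \<phi> r m = 0"
proof (cases "2 * int m - 1 - r < 0")
  case True
  with assms(3) show ?thesis by (rule recurrence_sum_eq_0_if_neg)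
next
  case False
  then obtain n where "int n = 2 * int m - 1 - r"
    using that[of "nat (2 * int m - 1 - r)"] by simp
  from nth_one_minus_X_pow_mult_F_defect[OF assms(1,3) this, of \<phi>] assms(2) show ?thesis
    by simp
qed

lemma F_defect_eq_0_if_recurrence_sum_eq_0:
  assumes "even r"
    and vanish: "r < 0 \<Longrightarrow> \<forall>i. int i \<le> - r \<longrightarrow> fps_nth \<phi> i = 0"
    and recurrence: "\<forall>m\<ge>1. recurrence_sum \<phi> r m = 0"
  shows "F_defect r \<phi> = 0"
proof (rule ccontr)
  define D where "D = F_defect r \<phi>"
  define N where "N = subdegree D"
  assume "F_defect r \<phi> \<noteq> 0"
  then have "D \<noteq> 0" by (simp add: D_def)
  then have "fps_nth D N \<noteq> 0" by (simp add: N_def)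
  have "odd N"
    unfolding N_def using \<open>D \<noteq> 0\<close> F_defect_compose[of r \<phi>]
    by (intro odd_subdegree_if_compose_eq_neg[where k = "- r"]) (simp_all add: D_def)
  have "1 - r \<le> int N"
  proof (cases "r < 0")
    case True
    have "fps_nth D j = 0" if "int j \<le> - r" for j
      unfolding D_def using vanish[OF True] that by (intro nth_F_defect_eq_0) auto
    with \<open>fps_nth D N \<noteq> 0\<close> have "\<not> int N \<le> - r" by blast
    then show ?thesis by simp
  next
    case False
    with \<open>odd N\<close> show ?thesis by (cases N) auto
  qed
  have "odd (int N)" using \<open>odd N\<close> by simp
  with assms(1) have "even (int N + 1 + r)" by presburger
  then obtain k where k: "int N + 1 + r = 2 * k" by (rule evenE)
  define m where "m = nat k"
  have "m \<ge> 1" and m: "int N = 2 * int m - 1 - r"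
    using k \<open>1 - r \<le> int N\<close> by (simp_all add: m_def)
  have "fps_nth (one_minus_X_pow (int m - 1 - r) * D) N = fps_nth D N"
    by (simp add: N_def)
  moreover have "fps_nth (one_minus_X_pow (int m - 1 - r) * D) N = 0"
    using nth_one_minus_X_pow_mult_F_defect[OF assms(1) \<open>m \<ge> 1\<close> m, of \<phi>] recurrence \<open>m \<ge> 1\<close>
    by (simp add: D_def)
  ultimately show False using \<open>fps_nth D N \<noteq> 0\<close> by simp
qed

theorem corollary4p2:
  fixes \<phi> :: "'a::field_char_0 fps" and r :: int
  assumes "even r"
    and "r < 0 \<Longrightarrow> (\<forall>i::nat. int i \<le> - r \<longrightarrow> fps_nth \<phi> i = 0)"
  shows "(\<forall>m::nat. m \<ge> 1 \<longrightarrow>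
            (\<Sum>i = 0..m - 1. (-1) ^ i * of_nat ((m - 1) choose i) * coeff_int \<phi> (int m - r + int i)) = 0)
         \<longleftrightarrow> \<phi> \<in> F_space r"
proof -
  have "(\<forall>m::nat. m \<ge> 1 \<longrightarrow>
            (\<Sum>i = 0..m - 1. (-1) ^ i * of_nat ((m - 1) choose i) * coeff_int \<phi> (int m - r + int i)) = 0)
      \<longleftrightarrow> (\<forall>m\<ge>1. recurrence_sum \<phi> r m = 0)"
    by (simp add: recurrence_sum_def)
  also have "\<dots> \<longleftrightarrow> F_defect r \<phi> = 0"
  proof
    assume "\<forall>m\<ge>1. recurrence_sum \<phi> r m = 0"
    with assms show "F_defect r \<phi> = 0" by (rule F_defect_eq_0_if_recurrence_sum_eq_0)
  next
    assume "F_defect r \<phi> = 0"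
    then show "\<forall>m\<ge>1. recurrence_sum \<phi> r m = 0"
      by (simp add: recurrence_sum_eq_0_if_F_defect_eq_0[OF assms(1)])
  qed
  also have "\<dots> \<longleftrightarrow> \<phi> \<in> F_space r"
    by (simp add: F_space_iff_F_defect_eq_0)
  finally show ?thesis .
qed

end
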